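(* Consider the problem of minimizing $f(x)$ subject to $g(x)\in\Theta$, where $\Theta\subset\mathbb{R}^m$ is a nonempty convex polyhedron, and let $\bar x$ be a local minimizer. Assume $f:\mathbb{R}^n\to\mathbb{R}$ is of class $\mathcal C^{1,1}$ around $\bar x$, $g:\mathbb{R}^n\to\mathbb{R}^m$ is $\mathcal C^2$-smooth around $\bar x$, and MSCQ holds at $\bar x$. Then there exists $\bar y\in N_\Theta(g(\bar x))$ with $\nabla f(\bar x)+\nabla g(\bar x)^*\bar y=0$. If moreover such $\bar y$ is unique, then $$\langle z,w\rangle+\langle w,\nabla^2\langle\bar y,g\rangle(\bar x)w\rangle\ge0\quad\text{for all } w\in-K_\Gamma(\bar x,-\nabla f(\bar x)),\ z\in\breve\partial^2f(\bar x)(w).$$ If $\bar x$ is a strong local minimizer with modulus $\sigma>0$ (and $\bar y$ is unique), then $$\langle z,w\rangle+\langle w,\nabla^2\langle\bar y,g\rangle(\bar x)w\rangle\ge\sigma\|w\|^2\quad\text{for all } w\in-K_\Gamma(\bar x,-\nabla f(\bar x)),\ z\in\breve\partial^2f(\bar x)(w).$$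
   Context: $\Gamma:=\{x\in\mathbb{R}^n:g(x)\in\Theta\}$. $\mathcal C^{1,1}$ around $\bar x$: continuously differentiable with locally Lipschitz gradient near $\bar x$. MSCQ at $\bar x\in\Gamma$: there exist a neighborhood $U$ of $\bar x$ and $\kappa>0$ with $\operatorname{dist}(x;\Gamma)\le\kappa\operatorname{dist}(g(x);\Theta)$ for all $x\in U$. $N_\Theta$ is the normal cone of convex analysis. Tangent cone $T_\Omega(\bar x):=\{w:\exists t_k\downarrow0,\ w_k\to w,\ \bar x+t_kw_k\in\Omega\}$; critical cone $K_\Omega(\bar x,\bar v):=T_\Omega(\bar x)\cap\{\bar v\}^\perp$. $\nabla^2\langle y,g\rangle(x)$ is the Hessian of $x\mapsto\langle y,g(x)\rangle$. For $\mathcal C^1$ $f$, $\breve\partial^2f(\bar x)(w):=\widehat D^*(\nabla f)(\bar x)(w)=\{z:(z,-w)\in\widehat N_{\operatorname{gph}\nabla f}(\bar x,\nabla f(\bar x))\}$ with $\widehat N$ the regular (Fréchet) normal cone. Strong local minimizer with modulus $\sigma$: $f(x)\ge f(\bar x)+\frac\sigma2\|x-\bar x\|^2$ for feasible $x$ near $\bar x$. *)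

theory Defs
  imports "HOL-Analysis.Analysis"
begin

definition normal_cone :: "'a::real_inner set \<Rightarrow> 'a \<Rightarrow> 'a set" where
  "normal_cone \<Theta> v = {y. \<forall>u\<in>\<Theta>. inner y (u - v) \<le> 0}"

definition regular_normal_cone :: "'a::real_inner set \<Rightarrow> 'a \<Rightarrow> 'a set" where
  "regular_normal_cone \<Omega> z0 =
     {v. \<forall>\<epsilon>>0. \<exists>\<delta>>0. \<forall>z\<in>\<Omega>. norm (z - z0) < \<delta> \<longrightarrow>
            inner v (z - z0) \<le> \<epsilon> * norm (z - z0)}"

definition tangent_cone :: "'a::real_normed_vector set \<Rightarrow> 'a \<Rightarrow> 'a set" where
  "tangent_cone \<Omega> x0 =
     {w. \<exists>t wk. (\<forall>k. t k > 0) \<and> t \<longlonglongrightarrow> 0 \<and> wk \<longlonglongrightarrow> w \<and>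
              (\<forall>k. x0 + t k *\<^sub>R wk k \<in> \<Omega>)}"

definition critical_cone :: "'a::real_inner set \<Rightarrow> 'a \<Rightarrow> 'a \<Rightarrow> 'a set" where
  "critical_cone \<Omega> x0 v = tangent_cone \<Omega> x0 \<inter> {w. inner v w = 0}"

text \<open>Regular second-order subdifferential of a C1 function with gradient Df at x0:
  the regular coderivative of Df at (x0, Df x0) applied to w.\<close>
definition regular_second_subdiff ::
  "('a::real_inner \<Rightarrow> 'a) \<Rightarrow> 'a \<Rightarrow> 'a \<Rightarrow> 'a set" where
  "regular_second_subdiff Df x0 w =
     {z. (z, - w) \<in> regular_normal_cone {(x, Df x) | x. True} (x0, Df x0)}"

end

theory Submission
  imports Defs
begin

text \<open>
  Write \<open>\<Theta>\<close> as a finite intersection of half-spaces. If the second-order expansion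
  \<open>g(x) + t \<nabla>g(x) v + t\<^sup>2/2 (\<nabla>g(x) u + \<nabla>\<^sup>2g(x)[v,v])\<close> stays in \<open>\<Theta>\<close> for small \<open>t > 0\<close>, then
  MSCQ provides feasible points within \<open>o(t\<^sup>2)\<close> of the curve \<open>x + t v + t\<^sup>2/2 u\<close>. Comparing \<open>f\<close>
  at these points with the growth from below and with the bound from above that the regular
  normal \<open>(z, v)\<close> to the graph of \<open>\<nabla>f\<close> gives along the ray \<open>x + t v\<close>, one gets
  \<open>\<sigma>|v|\<^sup>2 \<le> -\<langle>z,v\<rangle> + \<langle>\<nabla>f(x),u\<rangle>\<close> for every such \<open>u\<close>. By Farkas' lemma over the constraints
  active along \<open>v\<close>, either some multiplier \<open>y\<close> satisfies \<open>\<sigma>|v|\<^sup>2 + \<langle>z,v\<rangle> \<le> \<langle>y,\<nabla>\<^sup>2g(x)[v,v]\<rangle>\<close>,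
  which by uniqueness is the given one, or there is a \<open>u\<close> violating this bound, or a direction
  violating first-order optimality. The same comparison along straight lines, at first order,
  gives the existence of multipliers.
\<close>

lemma taylor2_remainder_at_right:
  fixes \<phi> \<phi>' :: "real \<Rightarrow> real"
  assumes "\<delta> > 0"
    and deriv: "\<And>t. 0 \<le> t \<Longrightarrow> t < \<delta> \<Longrightarrow> (\<phi> has_real_derivative \<phi>' t) (at t)"
    and deriv2: "(\<phi>' has_real_derivative a) (at 0)"
    and "\<epsilon> > 0"
  shows "eventually (\<lambda>t. \<bar>\<phi> t - \<phi> 0 - t * \<phi>' 0 - t\<^sup>2 / 2 * a\<bar> \<le> \<epsilon> * t\<^sup>2) (at_right 0)"
proof -
  have "(\<phi>' has_derivative (\<lambda>h. h * a)) (at 0)"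
    using deriv2 by (simp add: has_field_derivative_def mult.commute[of _ a])
  then obtain d where d: "d > 0" "\<And>y. norm (y - 0) < d \<Longrightarrow> norm (\<phi>' y - \<phi>' 0 - (y - 0) * a) \<le> \<epsilon> * norm (y - 0)"
    unfolding has_derivative_at_alt using \<open>\<epsilon> > 0\<close> by blast
  have "\<bar>\<phi> t - \<phi> 0 - t * \<phi>' 0 - t\<^sup>2 / 2 * a\<bar> \<le> \<epsilon> * t\<^sup>2" if t: "0 < t" "t < min \<delta> d" for t
  proof -
    define \<psi> where "\<psi> s = \<phi> s - \<phi> 0 - s * \<phi>' 0 - s\<^sup>2 / 2 * a" for s
    have "(\<psi> has_real_derivative (\<phi>' s - \<phi>' 0 - s * a)) (at s)" if "0 \<le> s" "s \<le> t" for s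
      unfolding \<psi>_def using t that by (auto intro!: derivative_eq_intros deriv simp: power2_eq_square)
    then obtain \<xi> where \<xi>: "0 < \<xi>" "\<xi> < t" "\<psi> t - \<psi> 0 = (t - 0) * (\<phi>' \<xi> - \<phi>' 0 - \<xi> * a)"
      using MVT2[of 0 t \<psi> "\<lambda>s. \<phi>' s - \<phi>' 0 - s * a"] t by auto
    have "\<bar>\<phi>' \<xi> - \<phi>' 0 - \<xi> * a\<bar> \<le> \<epsilon> * \<xi>"
      using d(2)[of \<xi>] \<xi> t by auto
    then have "\<bar>\<psi> t\<bar> \<le> t * (\<epsilon> * \<xi>)" using \<xi> t by (simp add: \<psi>_def abs_mult)
    also have "\<dots> \<le> t * (\<epsilon> * t)" using \<xi> t \<open>\<epsilon> > 0\<close> by (intro mult_left_mono) auto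
    finally show ?thesis by (simp add: \<psi>_def power2_eq_square mult_ac)
  qed
  then show ?thesis
    unfolding eventually_at_right_field using \<open>\<delta> > 0\<close> d(1) by (intro exI[of _ "min \<delta> d"]) auto
qed

lemma DERIV_le_imp_quadratic_upper_bound:
  fixes \<phi> \<phi>' :: "real \<Rightarrow> real"
  assumes deriv: "\<And>s. 0 \<le> s \<Longrightarrow> s \<le> t \<Longrightarrow> (\<phi> has_real_derivative \<phi>' s) (at s)"
    and bound: "\<And>s. 0 \<le> s \<Longrightarrow> s \<le> t \<Longrightarrow> \<phi>' s \<le> s * C"
    and "0 \<le> t"
  shows "\<phi> t \<le> \<phi> 0 + t\<^sup>2 / 2 * C"
proof -
  define \<psi> where "\<psi> s = \<phi> s - s\<^sup>2 / 2 * C" for s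
  have "\<psi> t \<le> \<psi> 0"
  proof (rule DERIV_nonpos_imp_nonincreasing[OF \<open>0 \<le> t\<close>])
    fix s assume s: "0 \<le> s" "s \<le> t"
    have "(\<psi> has_real_derivative (\<phi>' s - s * C)) (at s)" unfolding \<psi>_def
      using s by (auto intro!: derivative_eq_intros deriv simp: power2_eq_square)
    then show "\<exists>y. (\<psi> has_real_derivative y) (at s) \<and> y \<le> 0" using bound[OF s] by auto
  qed
  then show ?thesis by (simp add: \<psi>_def)
qed

lemma lipschitz_gradient_taylor_bound:
  fixes f :: "'a::real_inner \<Rightarrow> real"
  assumes deriv: "\<forall>x\<in>ball c \<delta>. (f has_derivative (\<lambda>h. inner (Df x) h)) (at x)"
    and lip: "\<forall>x\<in>ball c \<delta>. \<forall>y\<in>ball c \<delta>. norm (Df x - Df y) \<le> L * dist x y"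
    and x: "x \<in> ball c \<delta>" and y: "y \<in> ball c \<delta>"
  shows "\<bar>f x - f y - inner (Df y) (x - y)\<bar> \<le> L * (norm (x - y))\<^sup>2"
proof (cases "x = y")
  case False
  define p where "p s = y + s *\<^sub>R (x - y)" for s
  have p_in: "p s \<in> ball c \<delta>" if "0 \<le> s" "s \<le> 1" for s
  proof -
    have "p s = (1 - s) *\<^sub>R y + s *\<^sub>R x" by (simp add: p_def algebra_simps)
    then show ?thesis using convexD_alt[OF convex_ball y x that] by simp
  qed
  have "((\<lambda>s. f (p s)) has_real_derivative inner (Df (p s)) (x - y)) (at s)" if "0 \<le> s" "s \<le> 1" for s
  proof -
    have "((\<lambda>s. f (p s)) has_derivative (\<lambda>h. inner (Df (p s)) (h *\<^sub>R (x - y)))) (at s)"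
      unfolding p_def
      by (rule has_derivative_compose[where f="\<lambda>s. y + s *\<^sub>R (x - y)", unfolded o_def])
         (use deriv p_in[OF that] in \<open>auto intro!: derivative_eq_intros simp: p_def\<close>)
    then show ?thesis
      by (simp add: has_field_derivative_def mult.commute[of _ "inner (Df (p s)) (x - y)"])
  qed
  then obtain \<xi> where \<xi>: "0 < \<xi>" "\<xi> < 1" "f (p 1) - f (p 0) = (1 - 0) * inner (Df (p \<xi>)) (x - y)"
    using MVT2[of 0 1 "\<lambda>s. f (p s)" "\<lambda>s. inner (Df (p s)) (x - y)"] by auto
  have "0 \<le> L * dist x y" using lip x y norm_ge_zero order_trans by blast
  then have L: "L \<ge> 0" using False by (simp add: zero_le_mult_iff)
  have "\<bar>f x - f y - inner (Df y) (x - y)\<bar> = \<bar>inner (Df (p \<xi>) - Df y) (x - y)\<bar>"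
    using \<xi> by (simp add: p_def inner_diff_left)
  also have "\<dots> \<le> norm (Df (p \<xi>) - Df y) * norm (x - y)" by (rule Cauchy_Schwarz_ineq2)
  also have "\<dots> \<le> (L * dist (p \<xi>) y) * norm (x - y)"
    using lip p_in[of \<xi>] \<xi> y by (intro mult_right_mono) auto
  also have "dist (p \<xi>) y = \<xi> * norm (x - y)" using \<xi> by (simp add: p_def dist_norm)
  also have "L * (\<xi> * norm (x - y)) * norm (x - y) \<le> L * (norm (x - y))\<^sup>2"
    using \<xi> L by (simp add: power2_eq_square mult_left_le_one_le mult_left_mono mult_ac)
  finally show ?thesis .
qed simp

lemma norm_add_power2_ge:
  fixes a r :: "'a::real_inner"
  shows "(norm a)\<^sup>2 - 2 * norm a * norm r \<le> (norm (a + r))\<^sup>2"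
proof -
  have "- (norm a * norm r) \<le> inner a r" using Cauchy_Schwarz_ineq2[of a "- r"] by simp
  moreover have "(norm (a + r))\<^sup>2 = (norm a)\<^sup>2 + 2 * inner a r + (norm r)\<^sup>2"
    by (simp add: power2_norm_eq_inner inner_add_left inner_add_right inner_commute[of r a])
  ultimately show ?thesis using zero_le_power2[of "norm r"] by linarith
qed

lemma norm_quadratic_curve_le:
  fixes v u :: "'a::real_normed_vector"
  assumes "0 \<le> t" "t \<le> 1"
  shows "norm (t *\<^sub>R v + (t\<^sup>2 / 2) *\<^sub>R u) \<le> t * (norm v + norm u)"
proof -
  have "t * t \<le> t * 2" using assms by (intro mult_left_mono) auto
  then have "t\<^sup>2 / 2 \<le> t" by (simp add: power2_eq_square)
  then have "t\<^sup>2 / 2 * norm u \<le> t * norm u" by (rule mult_right_mono) simp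
  then have "norm ((t\<^sup>2 / 2) *\<^sub>R u) \<le> t * norm u" by simp
  then show ?thesis
    using norm_triangle_ineq[of "t *\<^sub>R v" "(t\<^sup>2 / 2) *\<^sub>R u"] assms by (simp add: algebra_simps)
qed

lemma linear_perturbation_bound:
  fixes x b d :: "'a::real_normed_vector"
  assumes "0 < t" "e \<le> 1" "norm (x - (b + t *\<^sub>R d)) \<le> e * t"
  shows "norm (x - b) \<le> t * (norm d + 1)"
proof -
  have "norm (x - b) \<le> norm (x - (b + t *\<^sub>R d)) + norm (t *\<^sub>R d)"
    using norm_triangle_ineq[of "x - (b + t *\<^sub>R d)" "t *\<^sub>R d"] by simp
  moreover have "e * t \<le> t" using assms mult_right_mono[of e 1 t] by simp
  moreover have "norm (t *\<^sub>R d) = t * norm d" using assms by simp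
  ultimately show ?thesis using assms(3) unfolding distrib_left mult_1_right by linarith
qed

lemma quadratic_curve_has_derivative:
  fixes x v u :: "'a::real_normed_vector"
  shows "((\<lambda>t. x + t *\<^sub>R v + (t\<^sup>2 / 2) *\<^sub>R u) has_derivative (\<lambda>s. s *\<^sub>R (v + t *\<^sub>R u))) (at t)"
  by (auto intro!: derivative_eq_intros simp: fun_eq_iff algebra_simps power2_eq_square)

lemma quadratic_curve_perturbation_bounds:
  fixes x b v u :: "'a::real_normed_vector"
  assumes t: "0 < t" "t < e" "e \<le> 1"
    and near: "norm (x - (b + t *\<^sub>R v + (t\<^sup>2 / 2) *\<^sub>R u)) \<le> e * t\<^sup>2"
  defines "r \<equiv> x - b - t *\<^sub>R v" and "M \<equiv> norm u + 1"
  shows "norm r \<le> t\<^sup>2 * M" and "norm (x - b) \<le> t * (norm v + M)"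
    and "t * norm v * norm r \<le> t\<^sup>2 * (e * (norm v * M))"
    and "(t * norm v + norm r) * norm r \<le> t\<^sup>2 * (e * ((norm v + M) * M))"
proof -
  have "t\<^sup>2 \<le> t * e" using t by (simp add: power2_eq_square mult_left_mono)
  moreover have "t * e \<le> t" using t by (intro mult_left_le) auto
  ultimately have tM: "t\<^sup>2 * M \<le> t * M" by (intro mult_right_mono) (auto simp: M_def)
  have "norm r \<le> e * t\<^sup>2 + t\<^sup>2 / 2 * norm u"
    using near norm_triangle_ineq[of "r - (t\<^sup>2 / 2) *\<^sub>R u" "(t\<^sup>2 / 2) *\<^sub>R u"]
    by (simp add: r_def algebra_simps)
  moreover have "e * t\<^sup>2 \<le> t\<^sup>2" using t by (intro mult_left_le_one_le) auto
  moreover have "t\<^sup>2 / 2 * norm u \<le> t\<^sup>2 * norm u" by (intro mult_right_mono) auto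
  ultimately show r: "norm r \<le> t\<^sup>2 * M" unfolding M_def distrib_left mult_1_right by linarith
  show "norm (x - b) \<le> t * (norm v + M)"
    using norm_triangle_ineq[of "t *\<^sub>R v" r] r tM t by (simp add: r_def distrib_left)
  have "t * norm v * norm r \<le> t * norm v * (t\<^sup>2 * M)" using r t by (intro mult_left_mono) auto
  also have "\<dots> = t\<^sup>2 * (t * (norm v * M))" by (simp add: mult_ac)
  also have "\<dots> \<le> t\<^sup>2 * (e * (norm v * M))" using t by (intro mult_left_mono mult_right_mono) (auto simp: M_def)
  finally show "t * norm v * norm r \<le> t\<^sup>2 * (e * (norm v * M))" .
  have "(t * norm v + norm r) * norm r \<le> (t * (norm v + M)) * (t\<^sup>2 * M)"
    using r tM t by (intro mult_mono) (auto simp: distrib_left M_def)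
  also have "\<dots> = t\<^sup>2 * (t * ((norm v + M) * M))" by (simp add: mult_ac)
  also have "\<dots> \<le> t\<^sup>2 * (e * ((norm v + M) * M))" using t by (intro mult_left_mono mult_right_mono) (auto simp: M_def)
  finally show "(t * norm v + norm r) * norm r \<le> t\<^sup>2 * (e * ((norm v + M) * M))" .
qed

lemma nonneg_combinations_eq_convex_cone_hull:
  assumes "finite A"
  shows "{\<Sum>p\<in>A. l p *\<^sub>R h p | l. \<forall>p\<in>A. (0::real) \<le> l p} = convex_cone hull (h ` A)"
    (is "?C = _")
proof
  show "?C \<subseteq> convex_cone hull (h ` A)"
  proof clarify
    fix l :: "_ \<Rightarrow> real" assume "\<forall>p\<in>A. 0 \<le> l p"
    with assms show "(\<Sum>p\<in>A. l p *\<^sub>R h p) \<in> convex_cone hull (h ` A)"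
    proof (induction A rule: finite_induct)
      case empty then show ?case by (simp add: convex_cone_hull_contains_0)
    next
      case (insert x F)
      have "l x *\<^sub>R h x \<in> convex_cone hull (h ` insert x F)"
        using insert by (intro convex_cone_hull_mul) (auto intro: hull_inc)
      moreover have "(\<Sum>p\<in>F. l p *\<^sub>R h p) \<in> convex_cone hull (h ` insert x F)"
        using insert hull_mono[of "h ` F" "h ` insert x F"] by auto
      ultimately show ?case using insert by (simp add: convex_cone_hull_add)
    qed
  qed
next
  have "convex_cone ?C"
    unfolding convex_cone_iff
  proof (intro conjI ballI allI impI)
    show "0 \<in> ?C" by (rule CollectI, rule exI[of _ "\<lambda>_. 0"]) auto
  next
    fix x y assume "x \<in> ?C" "y \<in> ?C"
    then obtain l1 l2 where "x = (\<Sum>p\<in>A. l1 p *\<^sub>R h p)" "\<forall>p\<in>A. 0 \<le> l1 p"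
      "y = (\<Sum>p\<in>A. l2 p *\<^sub>R h p)" "\<forall>p\<in>A. 0 \<le> l2 p" by auto
    then show "x + y \<in> ?C"
      by (intro CollectI exI[of _ "\<lambda>p. l1 p + l2 p"]) (auto simp: scaleR_add_left sum.distrib)
  next
    fix x c assume "x \<in> ?C" "(0::real) \<le> c"
    then obtain l where "x = (\<Sum>p\<in>A. l p *\<^sub>R h p)" "\<forall>p\<in>A. 0 \<le> l p" by auto
    then show "c *\<^sub>R x \<in> ?C" using \<open>0 \<le> c\<close>
      by (intro CollectI exI[of _ "\<lambda>p. c * l p"]) (auto simp: scaleR_sum_right)
  qed
  moreover have "h q \<in> ?C" if "q \<in> A" for q
    using that assms
    by (intro CollectI exI[of _ "\<lambda>p. if p = q then 1 else 0"])
       (auto simp: if_distrib[of "\<lambda>c. c *\<^sub>R _"] sum.delta cong: if_cong)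
  ultimately show "convex_cone hull (h ` A) \<subseteq> ?C" by (intro hull_minimal) auto
qed

lemma separate_from_finite_cone:
  fixes h :: "'b \<Rightarrow> 'a::euclidean_space"
  assumes "finite A"
    and z: "z \<notin> {\<Sum>p\<in>A. l p *\<^sub>R h p | l. \<forall>p\<in>A. (0::real) \<le> l p}"
  shows "\<exists>d. inner d z < 0 \<and> (\<forall>p\<in>A. inner d (h p) \<ge> 0)"
proof -
  let ?S = "convex_cone hull (h ` A)"
  have "closed ?S"
    using assms by (intro polyhedron_imp_closed polyhedron_convex_cone_hull) auto
  moreover have "z \<notin> ?S" using z nonneg_combinations_eq_convex_cone_hull[OF \<open>finite A\<close>, of h] by simp
  ultimately obtain a b where ab: "inner a z < b" "\<forall>x\<in>?S. inner a x > b"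
    using separating_hyperplane_closed_point[OF convex_convex_cone_hull] by metis
  have b: "b < 0" using ab(2) convex_cone_hull_contains_0 by force
  have "inner a (h p) \<ge> 0" if p: "p \<in> A" for p
  proof (rule ccontr)
    assume neg: "\<not> ?thesis"
    define c where "c = b / inner a (h p)"
    have "c \<ge> 0" using b neg by (simp add: c_def divide_nonpos_neg)
    with p have "c *\<^sub>R h p \<in> ?S" by (intro convex_cone_hull_mul hull_inc) auto
    then have "inner a (c *\<^sub>R h p) > b" using ab by blast
    moreover have "inner a (c *\<^sub>R h p) = b" using neg by (simp add: c_def)
    ultimately show False by simp
  qed
  then show ?thesis using ab b by (intro exI[of _ a]) auto
qed

lemma farkas_inequality:
  fixes a :: "'i \<Rightarrow> 'a::euclidean_space" and b :: "'i \<Rightarrow> real"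
  assumes "finite I"
  obtains l where "\<forall>i\<in>I. 0 \<le> l i" "z = (\<Sum>i\<in>I. l i *\<^sub>R a i)" "\<gamma> \<le> (\<Sum>i\<in>I. l i * b i)"
    | d s where "0 \<le> s" "inner d z < s * \<gamma>" "\<forall>i\<in>I. s * b i \<le> inner d (a i)"
proof -
  \<comment> \<open>the slack of the inequality is the extra generator \<open>(0, -1)\<close>, indexed by \<open>None\<close>\<close>
  define h where "h k = (case k of None \<Rightarrow> (0, -1) | Some i \<Rightarrow> (a i, b i))" for k
  define S where "S = insert None (Some ` I)"
  have "finite S" using assms by (simp add: S_def)
  show thesis
  proof (cases "(z, \<gamma>) \<in> {\<Sum>k\<in>S. l k *\<^sub>R h k | l. \<forall>k\<in>S. (0::real) \<le> l k}")
    case True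
    then obtain l where l: "\<forall>k\<in>S. 0 \<le> l k" "(z, \<gamma>) = (\<Sum>k\<in>S. l k *\<^sub>R h k)" by auto
    have "(\<Sum>k\<in>S. l k *\<^sub>R h k) = l None *\<^sub>R h None + (\<Sum>i\<in>I. l (Some i) *\<^sub>R h (Some i))"
      using assms by (simp add: S_def sum.insert sum.reindex)
    then have "z = (\<Sum>i\<in>I. l (Some i) *\<^sub>R a i)" "\<gamma> = - l None + (\<Sum>i\<in>I. l (Some i) * b i)"
      using arg_cong[OF l(2), of fst] arg_cong[OF l(2), of snd] by (simp_all add: fst_sum snd_sum h_def)
    moreover have "0 \<le> l None" "\<forall>i\<in>I. 0 \<le> l (Some i)" using l(1) by (auto simp: S_def)
    ultimately show thesis by (intro that(1)[of "l \<circ> Some"]) auto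
  next
    case False
    then obtain d where d: "inner d (z, \<gamma>) < 0" "\<forall>k\<in>S. inner d (h k) \<ge> 0"
      using separate_from_finite_cone[OF \<open>finite S\<close>] by blast
    obtain d1 d2 where "d = (d1, d2)" by (cases d)
    with d show thesis
      by (intro that(2)[of "- d2" d1]) (auto simp: S_def h_def algebra_simps)
  qed
qed

lemma field_le_epsilon_mult:
  fixes x y K :: real
  assumes "\<And>e. 0 < e \<Longrightarrow> e \<le> 1 \<Longrightarrow> x \<le> y + e * K"
  shows "x \<le> y"
proof (rule field_le_epsilon)
  fix \<epsilon> :: real assume "0 < \<epsilon>"
  define e where "e = min 1 (\<epsilon> / (\<bar>K\<bar> + 1))"
  have e: "0 < e" "e \<le> 1" using \<open>0 < \<epsilon>\<close> by (auto simp: e_def)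
  have "e * K \<le> e * \<bar>K\<bar>" using e by (intro mult_left_mono) auto
  also have "\<dots> \<le> \<epsilon> / (\<bar>K\<bar> + 1) * \<bar>K\<bar>" by (intro mult_right_mono) (auto simp: e_def)
  also have "\<dots> \<le> \<epsilon>" using \<open>0 < \<epsilon>\<close> by (simp add: field_simps)
  finally show "x \<le> y + \<epsilon>" using assms[OF e] by simp
qed

lemma eventually_at_right_zero_ex: "eventually P (at_right (0::real)) \<Longrightarrow> \<exists>t>0. P t"
  unfolding eventually_at_right_field by (metis field_lbound_gt_zero less_numeral_extra(1))

lemma eventually_mult_less_at_right_zero:
  assumes "(c::real) > 0"
  shows "eventually (\<lambda>t. t * M < c) (at_right 0)"
proof -
  have "((\<lambda>t. t * M) \<longlongrightarrow> 0 * M) (at_right 0)" by (intro tendsto_intros)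
  then show ?thesis using assms by (intro order_tendstoD(2)) auto
qed

lemma eventually_quadratic_curve_in_open:
  fixes x v u :: "'a::real_normed_vector"
  assumes "open S" "x \<in> S"
  shows "eventually (\<lambda>t. x + t *\<^sub>R v + (t\<^sup>2 / 2) *\<^sub>R u \<in> S) (at_right 0)"
proof (rule topological_tendstoD[OF _ assms])
  have "((\<lambda>t. x + t *\<^sub>R v + (t\<^sup>2 / 2) *\<^sub>R u) \<longlongrightarrow> x + 0 *\<^sub>R v + (0\<^sup>2 / 2) *\<^sub>R u) (at_right 0)"
    by (intro tendsto_intros) auto
  then show "((\<lambda>t. x + t *\<^sub>R v + (t\<^sup>2 / 2) *\<^sub>R u) \<longlongrightarrow> x) (at_right 0)" by simp
qed

lemma halfspace_contains_curve_eventually: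
  fixes a y v w :: "'a::real_inner"
  assumes y: "inner a y \<le> b"
    and v: "inner a y = b \<Longrightarrow> inner a v \<le> 0"
    and w: "inner a y = b \<Longrightarrow> inner a v = 0 \<Longrightarrow> inner a w \<le> 0"
  shows "eventually (\<lambda>t. inner a (y + t *\<^sub>R v + t\<^sup>2 *\<^sub>R w) \<le> b) (at_right 0)"
proof -
  have eq: "inner a (y + t *\<^sub>R v + t\<^sup>2 *\<^sub>R w) = inner a y + t * inner a v + t\<^sup>2 * inner a w" for t
    by (simp add: inner_add_right)
  consider "inner a y < b" | "inner a y = b" "inner a v < 0" | "inner a y = b" "inner a v = 0"
    using y v by fastforce
  then show ?thesis
  proof cases
    case 1
    have "((\<lambda>t. inner a y + t * inner a v + t\<^sup>2 * inner a w) \<longlongrightarrow>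
            inner a y + 0 * inner a v + 0\<^sup>2 * inner a w) (at_right 0)"
      by (intro tendsto_intros)
    then have "eventually (\<lambda>t. inner a y + t * inner a v + t\<^sup>2 * inner a w < b) (at_right 0)"
      using 1 by (intro order_tendstoD(2)) auto
    then show ?thesis by eventually_elim (simp add: eq)
  next
    case 2
    have "((\<lambda>t. inner a v + t * inner a w) \<longlongrightarrow> inner a v + 0 * inner a w) (at_right 0)"
      by (intro tendsto_intros)
    then have "eventually (\<lambda>t. inner a v + t * inner a w < 0) (at_right 0)"
      using 2 by (intro order_tendstoD(2)) auto
    then show ?thesis using eventually_at_right_less[of "0::real"]
    proof eventually_elim
      case (elim t)
      then have "t * (inner a v + t * inner a w) \<le> 0" by (simp add: mult_pos_neg less_imp_le)
      then show ?case using 2 by (simp add: eq power2_eq_square algebra_simps)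
    qed
  next
    case 3
    then show ?thesis using w
      by (intro always_eventually allI) (simp add: eq mult_nonneg_nonpos)
  qed
qed

lemma polyhedron_finite_inequalities:
  assumes "polyhedron (S :: 'a::euclidean_space set)"
  obtains P where "finite P" "S = {y. \<forall>p\<in>P. inner (fst p) y \<le> snd p}"
proof -
  obtain F where F: "finite F" "S = \<Inter>F" "\<forall>h\<in>F. \<exists>a b. a \<noteq> 0 \<and> h = {x. a \<bullet> x \<le> b}"
    using assms unfolding polyhedron_def by blast
  then have "\<forall>h\<in>F. \<exists>q. h = {x. fst q \<bullet> x \<le> snd q}" by fastforce
  then obtain ab where ab: "\<forall>h\<in>F. h = {x. fst (ab h) \<bullet> x \<le> snd (ab h)}"
    by (rule bchoice[elim_format]) blast
  have "y \<in> S \<longleftrightarrow> (\<forall>h\<in>F. fst (ab h) \<bullet> y \<le> snd (ab h))" for y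
  proof -
    have "y \<in> h \<longleftrightarrow> fst (ab h) \<bullet> y \<le> snd (ab h)" if "h \<in> F" for h
      using ab that by blast
    then show ?thesis using F(2) by blast
  qed
  then show thesis using F(1) by (intro that[of "ab ` F"]) auto
qed

lemma matrix_sum_scaleR_mult_vector:
  assumes "finite S"
  shows "(\<Sum>i\<in>S. c i *\<^sub>R (H i :: real^'n^'m)) *v x = (\<Sum>i\<in>S. c i *\<^sub>R (H i *v x))"
  using assms by (induction S rule: finite_induct)
    (auto simp: matrix_vector_mult_add_rdistrib scaleR_matrix_vector_assoc)

locale polyhedral_minimizer =
  fixes f :: "real^'n \<Rightarrow> real" and Df :: "real^'n \<Rightarrow> real^'n"
    and g :: "real^'n \<Rightarrow> real^'m" and Jg :: "real^'n \<Rightarrow> real^'n^'m"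
    and Hg :: "'m \<Rightarrow> real^'n \<Rightarrow> real^'n^'n"
    and \<Theta> :: "(real^'m) set" and xb :: "real^'n"
    and P :: "((real^'m) \<times> real) set"
    and \<delta>f L \<delta>g :: real and U :: "(real^'n) set" and \<kappa> :: real
  assumes finite_P: "finite P"
    and Theta_eq: "\<Theta> = {y. \<forall>p\<in>P. inner (fst p) y \<le> snd p}"
    and feasible: "g xb \<in> \<Theta>"
    and local_min: "\<exists>\<epsilon>>0. \<forall>x. g x \<in> \<Theta> \<and> dist x xb < \<epsilon> \<longrightarrow> f xb \<le> f x"
    and \<delta>f_pos: "\<delta>f > 0"
    and f_deriv: "\<forall>x\<in>ball xb \<delta>f. (f has_derivative (\<lambda>h. inner (Df x) h)) (at x)"
    and Df_lipschitz: "\<forall>x\<in>ball xb \<delta>f. \<forall>y\<in>ball xb \<delta>f. norm (Df x - Df y) \<le> L * dist x y"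
    and \<delta>g_pos: "\<delta>g > 0"
    and g_deriv: "\<forall>x\<in>ball xb \<delta>g. (g has_derivative (\<lambda>h. Jg x *v h)) (at x)"
    and Jg_deriv: "\<forall>i. ((\<lambda>u. Jg u $ i) has_derivative (\<lambda>h. Hg i xb *v h)) (at xb)"
    and U_open: "open U" and xb_in_U: "xb \<in> U" and \<kappa>_pos: "\<kappa> > 0"
    and MSCQ: "\<forall>x\<in>U. infdist x {x. g x \<in> \<Theta>} \<le> \<kappa> * infdist (g x) \<Theta>"
begin

definition active :: "((real^'m) \<times> real) set"
  where "active = {p\<in>P. inner (fst p) (g xb) = snd p}"

definition hess_g :: "real^'n \<Rightarrow> real^'m"
  where "hess_g v = (\<chi> j. inner (Hg j xb *v v) v)"

lemma finite_active: "finite active"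
  using finite_P by (simp add: active_def)

lemma inner_hess_g:
  "inner v ((\<Sum>i\<in>UNIV. y $ i *\<^sub>R Hg i xb) *v v) = inner y (hess_g v)"
proof -
  have "inner v ((\<Sum>i\<in>UNIV. y $ i *\<^sub>R Hg i xb) *v v) = (\<Sum>i\<in>UNIV. y $ i * inner v (Hg i xb *v v))"
    by (simp add: matrix_sum_scaleR_mult_vector inner_sum_right)
  also have "\<dots> = (\<Sum>i\<in>UNIV. y $ i * hess_g v $ i)"
    by (simp add: hess_g_def inner_commute)
  finally show ?thesis by (simp add: inner_vec_def)
qed

lemma near_feasible_point:
  assumes "c \<in> U" "q \<in> \<Theta>" "\<eta> > 0"
  obtains x where "g x \<in> \<Theta>" "dist x c \<le> \<kappa> * dist (g c) q + \<eta>"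
proof -
  let ?\<Gamma> = "{x. g x \<in> \<Theta>}"
  have nonempty: "?\<Gamma> \<noteq> {}" using feasible by auto
  have "infdist c ?\<Gamma> \<le> \<kappa> * infdist (g c) \<Theta>" using MSCQ \<open>c \<in> U\<close> by auto
  also have "\<dots> \<le> \<kappa> * dist (g c) q" using \<kappa>_pos infdist_le[OF \<open>q \<in> \<Theta>\<close>] by (intro mult_left_mono) auto
  finally have "infdist c ?\<Gamma> < \<kappa> * dist (g c) q + \<eta>" using \<open>\<eta> > 0\<close> by simp
  then have "\<exists>x\<in>?\<Gamma>. dist c x < \<kappa> * dist (g c) q + \<eta>"
    unfolding infdist_notempty[OF nonempty]
    by (subst (asm) cINF_less_iff[OF nonempty]) (auto intro: bdd_belowI2[of _ 0])
  then show thesis using that by (auto simp: dist_commute intro: less_imp_le)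
qed

lemma g_linearization:
  assumes "e > 0"
  shows "\<exists>\<rho>>0. \<forall>h. norm h < \<rho> \<longrightarrow> norm (g (xb + h) - g xb - Jg xb *v h) \<le> e * norm h"
proof -
  have "(g has_derivative (\<lambda>h. Jg xb *v h)) (at xb)" using g_deriv \<delta>g_pos by auto
  then obtain \<rho> where "\<rho> > 0"
    "\<forall>y. norm (y - xb) < \<rho> \<longrightarrow> norm (g y - g xb - Jg xb *v (y - xb)) \<le> e * norm (y - xb)"
    unfolding has_derivative_at_alt using assms by blast
  then show ?thesis by (intro exI[of _ \<rho>]) (auto dest: spec[of _ "xb + _"])
qed

lemma tangent_cone_linearized:
  assumes v: "v \<in> tangent_cone {x. g x \<in> \<Theta>} xb" and p: "p \<in> active"
  shows "inner (fst p) (Jg xb *v v) \<le> 0"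
proof -
  obtain t w where tw: "\<forall>k. t k > 0" "t \<longlonglongrightarrow> 0" "w \<longlonglongrightarrow> v" "\<forall>k. g (xb + t k *\<^sub>R w k) \<in> \<Theta>"
    using v unfolding tangent_cone_def by auto
  define a where "a = fst p"
  have pP: "p \<in> P" and ab: "inner a (g xb) = snd p" using p by (auto simp: active_def a_def)
  have "inner (a v* Jg xb) v \<le> 0 + e * (norm a * norm v)" if e: "0 < e" "e \<le> 1" for e
  proof -
    obtain \<rho> where \<rho>: "\<rho> > 0" "\<forall>h. norm h < \<rho> \<longrightarrow> norm (g (xb + h) - g xb - Jg xb *v h) \<le> e * norm h"
      using g_linearization[OF e(1)] by blast
    have "(\<lambda>k. t k *\<^sub>R w k) \<longlonglongrightarrow> 0 *\<^sub>R v" using tw by (intro tendsto_intros)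
    then have "eventually (\<lambda>k. norm (t k *\<^sub>R w k) < \<rho>) sequentially"
      using \<rho> by (intro order_tendstoD(2)[OF tendsto_norm_zero]) auto
    then have "eventually (\<lambda>k. inner (a v* Jg xb) (w k) \<le> e * (norm a * norm (w k))) sequentially"
    proof eventually_elim
      case (elim k)
      let ?h = "t k *\<^sub>R w k"
      have lin: "norm (g (xb + ?h) - g xb - Jg xb *v ?h) \<le> e * norm ?h" using \<rho>(2) elim by blast
      have "inner a (g (xb + ?h)) \<le> snd p" using tw(4) pP unfolding Theta_eq a_def by auto
      then have "inner a (g (xb + ?h) - g xb) \<le> 0" using ab by (simp add: inner_diff_right)
      moreover have "- inner a (g (xb + ?h) - g xb - Jg xb *v ?h) \<le> norm a * (e * norm ?h)"
      proof -
        have "- inner a (g (xb + ?h) - g xb - Jg xb *v ?h) \<le> norm a * norm (g (xb + ?h) - g xb - Jg xb *v ?h)"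
          using Cauchy_Schwarz_ineq2[of a "g (xb + ?h) - g xb - Jg xb *v ?h"] by linarith
        also have "\<dots> \<le> norm a * (e * norm ?h)" using lin by (intro mult_left_mono) auto
        finally show ?thesis .
      qed
      ultimately have "inner a (Jg xb *v ?h) \<le> norm a * (e * norm ?h)"
        by (simp add: inner_diff_right)
      then have "t k * inner a (Jg xb *v w k) \<le> t k * (e * (norm a * norm (w k)))"
        using tw(1) by (simp add: matrix_vector_mult_scaleR abs_of_pos mult_ac)
      then show ?case using tw(1) by (simp add: dot_lmul_matrix)
    qed
    moreover have "(\<lambda>k. inner (a v* Jg xb) (w k)) \<longlonglongrightarrow> inner (a v* Jg xb) v"
      and "(\<lambda>k. e * (norm a * norm (w k))) \<longlonglongrightarrow> e * (norm a * norm v)"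
      using tw by (auto intro!: tendsto_intros)
    ultimately show ?thesis by (simp add: tendsto_le[OF trivial_limit_sequentially])
  qed
  then have "inner (a v* Jg xb) v \<le> 0" by (rule field_le_epsilon_mult)
  then show ?thesis by (simp add: a_def dot_lmul_matrix)
qed

lemma curve_in_Theta_eventually:
  assumes "\<And>p. p \<in> active \<Longrightarrow> inner (fst p) v \<le> 0"
    and "\<And>p. p \<in> active \<Longrightarrow> inner (fst p) v = 0 \<Longrightarrow> inner (fst p) w \<le> 0"
  shows "eventually (\<lambda>t. g xb + t *\<^sub>R v + t\<^sup>2 *\<^sub>R w \<in> \<Theta>) (at_right 0)"
proof -
  have "\<forall>p\<in>P. eventually (\<lambda>t. inner (fst p) (g xb + t *\<^sub>R v + t\<^sup>2 *\<^sub>R w) \<le> snd p) (at_right 0)"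
    using feasible assms by (auto intro!: halfspace_contains_curve_eventually simp: Theta_eq active_def)
  from eventually_ball_finite[OF finite_P this] show ?thesis
    by eventually_elim (auto simp: Theta_eq)
qed

lemma feasible_near_first_order_curve:
  assumes d: "\<forall>p\<in>active. inner (fst p) (Jg xb *v d) \<le> 0" and "e > 0"
  shows "eventually (\<lambda>t. \<exists>x. g x \<in> \<Theta> \<and> norm (x - (xb + t *\<^sub>R d)) \<le> e * t) (at_right 0)"
proof -
  define e' where "e' = e / (\<kappa> * norm d + 1)"
  have denom: "\<kappa> * norm d + 1 > 0" using \<kappa>_pos by (intro add_nonneg_pos) auto
  then have e': "e' > 0" using \<open>e > 0\<close> by (simp add: e'_def)
  obtain \<rho> where \<rho>: "\<rho> > 0" "\<forall>h. norm h < \<rho> \<longrightarrow> norm (g (xb + h) - g xb - Jg xb *v h) \<le> e' * norm h"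
    using g_linearization[OF e'] by blast
  have "eventually (\<lambda>t. g xb + t *\<^sub>R (Jg xb *v d) + t\<^sup>2 *\<^sub>R 0 \<in> \<Theta>) (at_right 0)"
    using d by (intro curve_in_Theta_eventually) auto
  moreover have "eventually (\<lambda>t. xb + t *\<^sub>R d + (t\<^sup>2 / 2) *\<^sub>R 0 \<in> U) (at_right 0)"
    by (rule eventually_quadratic_curve_in_open[OF U_open xb_in_U])
  moreover note eventually_mult_less_at_right_zero[OF \<rho>(1), of "norm d"]
    eventually_at_right_less[of "0::real"]
  ultimately show ?thesis
  proof eventually_elim
    case (elim t)
    define c where "c = xb + t *\<^sub>R d"
    define q where "q = g xb + t *\<^sub>R (Jg xb *v d)"
    have gq: "dist (g c) q \<le> e' * (t * norm d)"
      using \<rho>(2)[rule_format, of "t *\<^sub>R d"] elim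
      by (simp add: c_def q_def dist_norm matrix_vector_mult_scaleR algebra_simps)
    obtain x where x: "g x \<in> \<Theta>" "dist x c \<le> \<kappa> * dist (g c) q + e' * t"
      using near_feasible_point[of c q "e' * t"] elim e' by (auto simp: c_def q_def)
    have "\<kappa> * dist (g c) q \<le> \<kappa> * (e' * (t * norm d))" using gq \<kappa>_pos by (intro mult_left_mono) auto
    then have "norm (x - c) \<le> e' * t * (\<kappa> * norm d + 1)"
      using x(2) by (simp add: dist_norm algebra_simps)
    also have "\<dots> = e * t" using denom by (simp add: e'_def)
    finally show ?case using x(1) by (auto simp: c_def)
  qed
qed

lemma first_order_estimate:
  fixes d :: "real^'n"
  defines "M \<equiv> norm d + 1"
  assumes t: "0 < t" "t < e" "e \<le> 1" "t * M < \<delta>f"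
    and x: "norm (x - (xb + t *\<^sub>R d)) \<le> e * t" and "f xb \<le> f x"
  shows "- inner (Df xb) d \<le> e * (norm (Df xb) + \<bar>L\<bar> * M\<^sup>2)"
proof -
  have x_near: "norm (x - xb) \<le> t * M"
    using linear_perturbation_bound[OF t(1,3) x] by (simp add: M_def)
  then have x_in: "x \<in> ball xb \<delta>f" using t by (simp add: dist_norm norm_minus_commute)
  have "f x \<le> f xb + inner (Df xb) (x - xb) + L * (norm (x - xb))\<^sup>2"
    using lipschitz_gradient_taylor_bound[OF f_deriv Df_lipschitz x_in, of xb] \<delta>f_pos by auto
  moreover have "inner (Df xb) (x - xb) \<le> t * inner (Df xb) d + norm (Df xb) * (e * t)"
  proof -
    have "inner (Df xb) (x - (xb + t *\<^sub>R d)) \<le> norm (Df xb) * norm (x - (xb + t *\<^sub>R d))"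
      by (rule norm_cauchy_schwarz)
    also have "\<dots> \<le> norm (Df xb) * (e * t)" using x by (intro mult_left_mono) auto
    finally show ?thesis by (simp add: inner_diff_right inner_add_right)
  qed
  moreover have "L * (norm (x - xb))\<^sup>2 \<le> t * (e * (\<bar>L\<bar> * M\<^sup>2))"
  proof -
    have "L * (norm (x - xb))\<^sup>2 \<le> \<bar>L\<bar> * (t * M)\<^sup>2"
      using x_near by (intro mult_mono power_mono) auto
    also have "\<dots> = t * (t * (\<bar>L\<bar> * M\<^sup>2))" by (simp add: power2_eq_square mult_ac)
    also have "\<dots> \<le> t * (e * (\<bar>L\<bar> * M\<^sup>2))" using t by (intro mult_left_mono mult_right_mono) auto
    finally show ?thesis .
  qed
  ultimately have "t * (- inner (Df xb) d) \<le> t * (e * (norm (Df xb) + \<bar>L\<bar> * M\<^sup>2))"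
    using \<open>f xb \<le> f x\<close> by (simp add: algebra_simps)
  with t show ?thesis by (auto intro: mult_left_le_imp_le[of t])
qed

lemma first_order_necessary:
  assumes d: "\<forall>p\<in>active. inner (fst p) (Jg xb *v d) \<le> 0"
  shows "inner (Df xb) d \<ge> 0"
proof -
  obtain \<epsilon> where \<epsilon>: "\<epsilon> > 0" "\<forall>x. g x \<in> \<Theta> \<and> dist x xb < \<epsilon> \<longrightarrow> f xb \<le> f x"
    using local_min by blast
  define M where "M = norm d + 1"
  have "- inner (Df xb) d \<le> 0 + e * (norm (Df xb) + \<bar>L\<bar> * M\<^sup>2)" if e: "0 < e" "e \<le> 1" for e
  proof -
    have "eventually (\<lambda>t. (\<exists>x. g x \<in> \<Theta> \<and> norm (x - (xb + t *\<^sub>R d)) \<le> e * t)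
        \<and> t * M < min \<delta>f \<epsilon> \<and> 0 < t \<and> t < e) (at_right 0)"
      using feasible_near_first_order_curve[OF d e(1)] \<delta>f_pos \<epsilon>(1) e(1)
      by (intro eventually_conj eventually_mult_less_at_right_zero eventually_at_right_less)
         (auto simp: eventually_at_right_field)
    then obtain t x where t: "0 < t" "t < e" "t * M < min \<delta>f \<epsilon>"
      and x: "g x \<in> \<Theta>" "norm (x - (xb + t *\<^sub>R d)) \<le> e * t"
      using eventually_at_right_zero_ex by blast
    have "dist x xb < \<epsilon>"
      using linear_perturbation_bound[OF t(1) e(2) x(2)] t(3) by (simp add: M_def dist_norm)
    with \<epsilon>(2) x(1) have "f xb \<le> f x" by blast
    with t e x(2) show ?thesis unfolding M_def by (simp add: first_order_estimate)
  qed
  then have "- inner (Df xb) d \<le> 0" by (rule field_le_epsilon_mult)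
  then show ?thesis by simp
qed

lemma g_component_deriv_along_curve:
  assumes "xb + t *\<^sub>R v + (t\<^sup>2 / 2) *\<^sub>R u \<in> ball xb \<delta>g"
  shows "((\<lambda>t. g (xb + t *\<^sub>R v + (t\<^sup>2 / 2) *\<^sub>R u) $ j) has_real_derivative
           inner (Jg (xb + t *\<^sub>R v + (t\<^sup>2 / 2) *\<^sub>R u) $ j) (v + t *\<^sub>R u)) (at t)"
proof -
  let ?c = "xb + t *\<^sub>R v + (t\<^sup>2 / 2) *\<^sub>R u"
  have "(g has_derivative (\<lambda>h. Jg ?c *v h)) (at ?c)" using g_deriv assms by auto
  from has_derivative_compose[OF quadratic_curve_has_derivative this]
  have "((\<lambda>t. g (xb + t *\<^sub>R v + (t\<^sup>2 / 2) *\<^sub>R u) $ j) has_derivative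
      (\<lambda>s. (Jg ?c *v (s *\<^sub>R (v + t *\<^sub>R u))) $ j)) (at t)"
    by (rule bounded_linear.has_derivative[OF bounded_linear_vec_nth, unfolded o_def])
  moreover have "(\<lambda>s. (Jg ?c *v (s *\<^sub>R (v + t *\<^sub>R u))) $ j) = (*) (inner (Jg ?c $ j) (v + t *\<^sub>R u))"
    by (auto simp: fun_eq_iff matrix_vector_mul_component)
  ultimately show ?thesis by (simp add: has_field_derivative_def)
qed

lemma Jg_component_deriv_along_curve:
  "((\<lambda>t. inner (Jg (xb + t *\<^sub>R v + (t\<^sup>2 / 2) *\<^sub>R u) $ j) (v + t *\<^sub>R u)) has_real_derivative
      inner (Jg xb $ j) u + inner (Hg j xb *v v) v) (at 0)"
proof -
  have "((\<lambda>x. Jg x $ j) has_derivative (\<lambda>h. Hg j xb *v h)) (at (xb + 0 *\<^sub>R v + (0\<^sup>2 / 2) *\<^sub>R u))"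
    using Jg_deriv by simp
  from has_derivative_compose[OF quadratic_curve_has_derivative this]
  have "((\<lambda>t. Jg (xb + t *\<^sub>R v + (t\<^sup>2 / 2) *\<^sub>R u) $ j) has_derivative (\<lambda>s. Hg j xb *v (s *\<^sub>R v))) (at 0)"
    by (simp add: o_def)
  moreover have "((\<lambda>t. v + t *\<^sub>R u) has_derivative (\<lambda>s. s *\<^sub>R u)) (at 0)"
    by (auto intro!: derivative_eq_intros)
  ultimately have "((\<lambda>t. inner (Jg (xb + t *\<^sub>R v + (t\<^sup>2 / 2) *\<^sub>R u) $ j) (v + t *\<^sub>R u)) has_derivative
      (\<lambda>h. inner (Jg xb $ j) (h *\<^sub>R u) + inner (Hg j xb *v (h *\<^sub>R v)) v)) (at 0)"
    by (auto dest: has_derivative_inner)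
  moreover have "(\<lambda>h. inner (Jg xb $ j) (h *\<^sub>R u) + inner (Hg j xb *v (h *\<^sub>R v)) v)
      = (*) (inner (Jg xb $ j) u + inner (Hg j xb *v v) v)"
    by (auto simp: fun_eq_iff matrix_vector_mult_scaleR algebra_simps)
  ultimately show ?thesis by (simp add: has_field_derivative_def)
qed

lemma g_component_expansion:
  assumes "e > 0"
  shows "eventually (\<lambda>t. \<bar>g (xb + t *\<^sub>R v + (t\<^sup>2 / 2) *\<^sub>R u) $ j
            - (g xb + t *\<^sub>R (Jg xb *v v) + (t\<^sup>2 / 2) *\<^sub>R (Jg xb *v u + hess_g v)) $ j\<bar> \<le> e * t\<^sup>2)
           (at_right 0)"
proof -
  define \<rho> where "\<rho> = min 1 (\<delta>g / (norm v + norm u + 1))"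
  have \<rho>: "\<rho> > 0" using \<delta>g_pos by (simp add: \<rho>_def add_nonneg_pos)
  have "xb + t *\<^sub>R v + (t\<^sup>2 / 2) *\<^sub>R u \<in> ball xb \<delta>g" if t: "0 \<le> t" "t < \<rho>" for t
  proof -
    have "norm (t *\<^sub>R v + (t\<^sup>2 / 2) *\<^sub>R u) \<le> t * (norm v + norm u)"
      using norm_quadratic_curve_le[of t v u] t by (simp add: \<rho>_def)
    also have "\<dots> \<le> t * (norm v + norm u + 1)" using t by (simp add: mult_left_mono)
    also have "\<dots> < \<delta>g" using t by (simp add: \<rho>_def pos_less_divide_eq add_nonneg_pos mult.commute)
    finally have "dist (xb + (t *\<^sub>R v + (t\<^sup>2 / 2) *\<^sub>R u)) xb < \<delta>g" by (simp add: dist_norm)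
    then show ?thesis by (simp add: dist_commute add.assoc)
  qed
  from taylor2_remainder_at_right[OF \<rho> g_component_deriv_along_curve[OF this]
      Jg_component_deriv_along_curve \<open>e > 0\<close>]
  show ?thesis
    by (simp add: hess_g_def matrix_vector_mul_component algebra_simps)
qed

lemma feasible_near_second_order_curve:
  assumes v: "\<forall>p\<in>active. inner (fst p) (Jg xb *v v) \<le> 0"
    and u: "\<forall>p\<in>active. inner (fst p) (Jg xb *v v) = 0 \<longrightarrow> inner (fst p) (Jg xb *v u + hess_g v) \<le> 0"
    and "e > 0"
  shows "eventually (\<lambda>t. \<exists>x. g x \<in> \<Theta> \<and> norm (x - (xb + t *\<^sub>R v + (t\<^sup>2 / 2) *\<^sub>R u)) \<le> e * t\<^sup>2)
           (at_right 0)"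
proof -
  define K where "K = \<kappa> * real CARD('m) + 1"
  have K: "K > 0" using \<kappa>_pos by (simp add: K_def add_nonneg_pos)
  define e' where "e' = e / K"
  have e': "e' > 0" using \<open>e > 0\<close> K by (simp add: e'_def)
  have "eventually (\<lambda>t. g xb + t *\<^sub>R (Jg xb *v v) + t\<^sup>2 *\<^sub>R ((1 / 2) *\<^sub>R (Jg xb *v u + hess_g v)) \<in> \<Theta>)
          (at_right 0)"
    using v u by (intro curve_in_Theta_eventually) auto
  moreover have "eventually (\<lambda>t. \<forall>j. \<bar>g (xb + t *\<^sub>R v + (t\<^sup>2 / 2) *\<^sub>R u) $ j
            - (g xb + t *\<^sub>R (Jg xb *v v) + (t\<^sup>2 / 2) *\<^sub>R (Jg xb *v u + hess_g v)) $ j\<bar> \<le> e' * t\<^sup>2)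
          (at_right 0)"
    using g_component_expansion[OF e'] by (intro eventually_all_finite) auto
  moreover note eventually_quadratic_curve_in_open[OF U_open xb_in_U, of v u]
    eventually_at_right_less[of "0::real"]
  ultimately show ?thesis
  proof eventually_elim
    case (elim t)
    define c where "c = xb + t *\<^sub>R v + (t\<^sup>2 / 2) *\<^sub>R u"
    define q where "q = g xb + t *\<^sub>R (Jg xb *v v) + (t\<^sup>2 / 2) *\<^sub>R (Jg xb *v u + hess_g v)"
    have "q \<in> \<Theta>" using elim(1) by (simp add: q_def)
    have "dist (g c) q \<le> (\<Sum>j\<in>UNIV. \<bar>(g c - q) $ j\<bar>)"
      unfolding dist_norm by (rule norm_le_l1_cart)
    also have "\<dots> \<le> (\<Sum>j\<in>(UNIV::'m set). e' * t\<^sup>2)"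
      using elim(2) by (intro sum_mono) (simp add: c_def q_def)
    finally have "\<kappa> * dist (g c) q \<le> \<kappa> * (real CARD('m) * (e' * t\<^sup>2))"
      using \<kappa>_pos by (intro mult_left_mono) auto
    moreover obtain x where x: "g x \<in> \<Theta>" "dist x c \<le> \<kappa> * dist (g c) q + e' * t\<^sup>2"
      using near_feasible_point[of c q "e' * t\<^sup>2"] elim \<open>q \<in> \<Theta>\<close> e' by (auto simp: c_def)
    ultimately have "norm (x - c) \<le> e' * t\<^sup>2 * K"
      by (simp add: K_def dist_norm algebra_simps)
    also have "\<dots> = e * t\<^sup>2" using K by (simp add: e'_def)
    finally show ?case using x(1) by (auto simp: c_def)
  qed
qed

lemma f_has_derivative_along_line:
  assumes "y + s *\<^sub>R w \<in> ball xb \<delta>f"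
  shows "((\<lambda>s. f (y + s *\<^sub>R w)) has_real_derivative inner (Df (y + s *\<^sub>R w)) w) (at s)"
proof -
  have "((\<lambda>s. f (y + s *\<^sub>R w)) has_derivative (\<lambda>h. inner (Df (y + s *\<^sub>R w)) (h *\<^sub>R w))) (at s)"
    by (rule has_derivative_compose[where f="\<lambda>s. y + s *\<^sub>R w", unfolded o_def])
       (use f_deriv assms in \<open>auto intro!: derivative_eq_intros\<close>)
  then show ?thesis
    by (simp add: has_field_derivative_def mult.commute[of _ "inner (Df (y + s *\<^sub>R w)) w"])
qed

lemma regular_normal_gradient_bound:
  assumes zv: "(z, v) \<in> regular_normal_cone {(x, Df x) | x. True} (xb, Df xb)"
    and Dv: "inner (Df xb) v = 0" and "e > 0"
  shows "\<exists>\<eta>>0. \<forall>s. 0 \<le> s \<and> s < \<eta> \<longrightarrow> inner (Df (xb + s *\<^sub>R v)) v \<le> s * (- inner z v + e)"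
proof -
  define K where "K = (1 + \<bar>L\<bar>) * norm v + 1"
  have K: "K > 0" by (simp add: K_def add_nonneg_pos)
  obtain \<delta> where \<delta>: "\<delta> > 0" "\<forall>w\<in>{(x, Df x) | x. True}. norm (w - (xb, Df xb)) < \<delta> \<longrightarrow>
        inner (z, v) (w - (xb, Df xb)) \<le> e / K * norm (w - (xb, Df xb))"
    using zv divide_pos_pos[OF \<open>e > 0\<close> K] unfolding regular_normal_cone_def by blast
  define \<eta> where "\<eta> = min (\<delta>f / K) (\<delta> / K)"
  have "inner (Df (xb + s *\<^sub>R v)) v \<le> s * (- inner z v + e)" if s: "0 \<le> s" "s < \<eta>" for s
  proof -
    define x where "x = xb + s *\<^sub>R v"
    have sK: "s * K < \<delta>f" "s * K < \<delta>" using s K by (auto simp: \<eta>_def pos_less_divide_eq)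
    have "0 \<le> \<bar>L\<bar> * norm v" by simp
    then have "norm v \<le> K" unfolding K_def distrib_right mult_1_left by linarith
    then have "s * norm v \<le> s * K" using s by (intro mult_left_mono) auto
    then have x_in: "x \<in> ball xb \<delta>f" using s sK by (simp add: x_def dist_norm)
    have "norm (Df x - Df xb) \<le> L * dist x xb" using Df_lipschitz x_in \<delta>f_pos by auto
    also have "\<dots> \<le> \<bar>L\<bar> * (s * norm v)" using s by (simp add: x_def dist_norm mult_right_mono)
    finally have "norm ((x, Df x) - (xb, Df xb)) \<le> s * norm v + \<bar>L\<bar> * (s * norm v)"
      using norm_Pair_le[of "x - xb" "Df x - Df xb"] s by (simp add: x_def)
    also have "\<dots> \<le> s * K" using s by (simp add: K_def algebra_simps)
    finally have near: "norm ((x, Df x) - (xb, Df xb)) \<le> s * K" .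
    then have "inner (z, v) ((x, Df x) - (xb, Df xb)) \<le> e / K * norm ((x, Df x) - (xb, Df xb))"
      using \<delta>(2) sK by auto
    also have "\<dots> \<le> e / K * (s * K)" using near \<open>e > 0\<close> K by (intro mult_left_mono) auto
    also have "\<dots> = s * e" using K by simp
    finally have "s * inner z v + inner v (Df x) - inner v (Df xb) \<le> s * e"
      by (simp add: x_def inner_diff_right inner_add_right)
    then show ?thesis using Dv by (simp add: x_def[symmetric] inner_commute algebra_simps)
  qed
  moreover have "\<eta> > 0" using \<delta>f_pos \<delta> K by (simp add: \<eta>_def)
  ultimately show ?thesis by blast
qed

lemma f_upper_along_ray:
  assumes zv: "(z, v) \<in> regular_normal_cone {(x, Df x) | x. True} (xb, Df xb)"
    and Dv: "inner (Df xb) v = 0" and "e > 0"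
  shows "eventually (\<lambda>t. f (xb + t *\<^sub>R v) \<le> f xb + t\<^sup>2 / 2 * (- inner z v + e)) (at_right 0)"
proof -
  obtain \<eta> where \<eta>: "\<eta> > 0"
    "\<forall>s. 0 \<le> s \<and> s < \<eta> \<longrightarrow> inner (Df (xb + s *\<^sub>R v)) v \<le> s * (- inner z v + e)"
    using regular_normal_gradient_bound[OF zv Dv \<open>e > 0\<close>] by blast
  define \<eta>' where "\<eta>' = min \<eta> (\<delta>f / (norm v + 1))"
  have "f (xb + t *\<^sub>R v) \<le> f xb + t\<^sup>2 / 2 * (- inner z v + e)" if t: "0 < t" "t < \<eta>'" for t
  proof -
    have "xb + s *\<^sub>R v \<in> ball xb \<delta>f" if "0 \<le> s" "s \<le> t" for s
    proof -
      have "s * norm v \<le> t * (norm v + 1)" using that by (intro mult_mono) auto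
      also have "\<dots> < \<delta>f" using t by (simp add: \<eta>'_def pos_less_divide_eq add_nonneg_pos)
      finally show ?thesis using that by (simp add: dist_norm)
    qed
    then have "f (xb + t *\<^sub>R v) \<le> f (xb + 0 *\<^sub>R v) + t\<^sup>2 / 2 * (- inner z v + e)"
      using f_has_derivative_along_line \<eta> t
      by (intro DERIV_le_imp_quadratic_upper_bound[where \<phi>'="\<lambda>s. inner (Df (xb + s *\<^sub>R v)) v"])
         (auto simp: \<eta>'_def)
    then show ?thesis by simp
  qed
  moreover have "\<eta>' > 0" using \<eta> \<delta>f_pos by (simp add: \<eta>'_def add_nonneg_pos)
  ultimately show ?thesis unfolding eventually_at_right_field by auto
qed

lemma f_upper_near_ray:
  assumes "xb + t *\<^sub>R v \<in> ball xb \<delta>f" "x \<in> ball xb \<delta>f" "0 \<le> t"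
  defines "r \<equiv> x - xb - t *\<^sub>R v"
  shows "f x \<le> f (xb + t *\<^sub>R v) + inner (Df xb) r + \<bar>L\<bar> * (t * norm v + norm r) * norm r"
proof -
  let ?y = "xb + t *\<^sub>R v"
  have "f x \<le> f ?y + inner (Df ?y) r + L * (norm r)\<^sup>2"
    using lipschitz_gradient_taylor_bound[OF f_deriv Df_lipschitz assms(2,1)]
    by (simp add: r_def algebra_simps)
  moreover have "inner (Df ?y - Df xb) r \<le> \<bar>L\<bar> * (t * norm v) * norm r"
  proof -
    have "norm (Df ?y - Df xb) \<le> L * dist ?y xb" using Df_lipschitz assms(1) \<delta>f_pos by auto
    also have "\<dots> \<le> \<bar>L\<bar> * (t * norm v)" using assms(3) by (simp add: dist_norm mult_right_mono)
    finally have "norm (Df ?y - Df xb) * norm r \<le> \<bar>L\<bar> * (t * norm v) * norm r"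
      by (rule mult_right_mono) simp
    then show ?thesis using norm_cauchy_schwarz[of "Df ?y - Df xb" r] by linarith
  qed
  moreover have "L * (norm r)\<^sup>2 \<le> \<bar>L\<bar> * norm r * norm r"
    by (simp add: power2_eq_square mult_right_mono mult.assoc)
  ultimately show ?thesis by (simp add: inner_diff_left algebra_simps)
qed

lemma second_order_estimate:
  fixes u v :: "real^'n" and \<sigma> :: real
  defines "M \<equiv> norm u + 1"
  defines "C \<equiv> 1 + 2 * norm (Df xb) + 2 * \<sigma> * norm v * M + 2 * \<bar>L\<bar> * (norm v + M) * M"
  assumes t: "0 < t" "t < e" "e \<le> 1" "t * (norm v + M) < min \<delta>f \<epsilon>"
    and x: "g x \<in> \<Theta>" "norm (x - (xb + t *\<^sub>R v + (t\<^sup>2 / 2) *\<^sub>R u)) \<le> e * t\<^sup>2"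
    and ray: "f (xb + t *\<^sub>R v) \<le> f xb + t\<^sup>2 / 2 * (- inner z v + e)"
    and \<sigma>: "\<sigma> \<ge> 0"
    and growth: "\<forall>x. g x \<in> \<Theta> \<and> dist x xb < \<epsilon> \<longrightarrow> f x \<ge> f xb + \<sigma> / 2 * (norm (x - xb))\<^sup>2"
  shows "\<sigma> * (norm v)\<^sup>2 \<le> - inner z v + inner (Df xb) u + e * C"
proof -
  define r where "r = x - xb - t *\<^sub>R v"
  note bounds = quadratic_curve_perturbation_bounds[OF t(1-3) x(2), folded r_def M_def]
  have x_in: "x \<in> ball xb \<delta>f" and "dist x xb < \<epsilon>"
    using bounds(2) t by (auto simp: dist_norm norm_minus_commute)
  have "t * norm v \<le> t * (norm v + M)" using t by (intro mult_left_mono) (auto simp: M_def)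
  then have "t * norm v < \<delta>f" using t(4) by linarith
  then have ray_in: "xb + t *\<^sub>R v \<in> ball xb \<delta>f" using t by (simp add: dist_norm)
  have "\<sigma> / 2 * ((t * norm v)\<^sup>2 - 2 * (t * norm v) * norm r) \<le> \<sigma> / 2 * (norm (x - xb))\<^sup>2"
    using norm_add_power2_ge[of "t *\<^sub>R v" r] \<sigma> t by (intro mult_left_mono) (auto simp: r_def)
  moreover have "f xb + \<sigma> / 2 * (norm (x - xb))\<^sup>2 \<le> f x"
    using growth x(1) \<open>dist x xb < \<epsilon>\<close> by blast
  moreover have "\<sigma> * (t * norm v * norm r) \<le> \<sigma> * (t\<^sup>2 * (e * (norm v * M)))"
    using bounds(3) \<sigma> by (rule mult_left_mono)
  ultimately have lower: "\<sigma> / 2 * (t * norm v)\<^sup>2 - \<sigma> * (t\<^sup>2 * (e * (norm v * M))) \<le> f x - f xb"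
    by (simp add: algebra_simps)
  have "inner (Df xb) r \<le> norm (Df xb) * (e * t\<^sup>2) + t\<^sup>2 / 2 * inner (Df xb) u"
  proof -
    have "inner (Df xb) (r - (t\<^sup>2 / 2) *\<^sub>R u) \<le> norm (Df xb) * norm (r - (t\<^sup>2 / 2) *\<^sub>R u)"
      by (rule norm_cauchy_schwarz)
    also have "\<dots> \<le> norm (Df xb) * (e * t\<^sup>2)"
      using x(2) by (intro mult_left_mono) (auto simp: r_def algebra_simps)
    finally show ?thesis by (simp add: inner_diff_right)
  qed
  moreover have "\<bar>L\<bar> * ((t * norm v + norm r) * norm r) \<le> \<bar>L\<bar> * (t\<^sup>2 * (e * ((norm v + M) * M)))"
    using bounds(4) by (rule mult_left_mono) simp
  ultimately have upper: "f x - f xb \<le> t\<^sup>2 / 2 * (- inner z v + e) + norm (Df xb) * (e * t\<^sup>2)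
      + t\<^sup>2 / 2 * inner (Df xb) u + t\<^sup>2 * (e * (\<bar>L\<bar> * (norm v + M) * M))"
    using f_upper_near_ray[OF ray_in x_in] t ray by (simp add: r_def mult_ac)
  let ?S = "t\<^sup>2 / 2 * (- inner z v + e) + norm (Df xb) * (e * t\<^sup>2) + t\<^sup>2 / 2 * inner (Df xb) u
      + \<sigma> * (t\<^sup>2 * (e * (norm v * M))) + t\<^sup>2 * (e * (\<bar>L\<bar> * (norm v + M) * M))"
  have estimate: "\<sigma> / 2 * (t * norm v)\<^sup>2 \<le> ?S" using lower upper by linarith
  have lhs: "t\<^sup>2 * (\<sigma> * (norm v)\<^sup>2) = 2 * (\<sigma> / 2 * (t * norm v)\<^sup>2)"
    by (simp add: power_mult_distrib)
  have rhs: "t\<^sup>2 * (- inner z v + inner (Df xb) u + e * C) = 2 * ?S"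
    by (simp add: C_def algebra_simps add_divide_distrib diff_divide_distrib)
  have "t\<^sup>2 * (\<sigma> * (norm v)\<^sup>2) \<le> t\<^sup>2 * (- inner z v + inner (Df xb) u + e * C)"
    unfolding lhs rhs using estimate by simp
  then show ?thesis using t by (auto intro: mult_left_le_imp_le[of "t\<^sup>2"])
qed

lemma second_order_core:
  assumes v: "\<forall>p\<in>active. inner (fst p) (Jg xb *v v) \<le> 0"
    and u: "\<forall>p\<in>active. inner (fst p) (Jg xb *v v) = 0 \<longrightarrow> inner (fst p) (Jg xb *v u + hess_g v) \<le> 0"
    and Dv: "inner (Df xb) v = 0"
    and zv: "(z, v) \<in> regular_normal_cone {(x, Df x) | x. True} (xb, Df xb)"
    and \<sigma>: "\<sigma> \<ge> 0"
    and growth: "\<exists>\<epsilon>>0. \<forall>x. g x \<in> \<Theta> \<and> dist x xb < \<epsilon> \<longrightarrow> f x \<ge> f xb + \<sigma> / 2 * (norm (x - xb))\<^sup>2"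
  shows "\<sigma> * (norm v)\<^sup>2 \<le> - inner z v + inner (Df xb) u"
proof -
  obtain \<epsilon> where \<epsilon>: "\<epsilon> > 0"
    "\<forall>x. g x \<in> \<Theta> \<and> dist x xb < \<epsilon> \<longrightarrow> f x \<ge> f xb + \<sigma> / 2 * (norm (x - xb))\<^sup>2"
    using growth by blast
  define M where "M = norm u + 1"
  have "\<sigma> * (norm v)\<^sup>2 \<le> - inner z v + inner (Df xb) u
      + e * (1 + 2 * norm (Df xb) + 2 * \<sigma> * norm v * M + 2 * \<bar>L\<bar> * (norm v + M) * M)"
    if e: "0 < e" "e \<le> 1" for e
  proof -
    have "eventually (\<lambda>t. (\<exists>x. g x \<in> \<Theta> \<and> norm (x - (xb + t *\<^sub>R v + (t\<^sup>2 / 2) *\<^sub>R u)) \<le> e * t\<^sup>2)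
        \<and> f (xb + t *\<^sub>R v) \<le> f xb + t\<^sup>2 / 2 * (- inner z v + e)
        \<and> t * (norm v + M) < min \<delta>f \<epsilon> \<and> 0 < t \<and> t < e) (at_right 0)"
      using feasible_near_second_order_curve[OF v u e(1)] f_upper_along_ray[OF zv Dv e(1)]
        \<delta>f_pos \<epsilon>(1) e(1)
      by (intro eventually_conj eventually_mult_less_at_right_zero eventually_at_right_less)
         (auto simp: eventually_at_right_field)
    then obtain t x where "0 < t" "t < e" "t * (norm v + M) < min \<delta>f \<epsilon>"
      and "g x \<in> \<Theta>" "norm (x - (xb + t *\<^sub>R v + (t\<^sup>2 / 2) *\<^sub>R u)) \<le> e * t\<^sup>2"
      and "f (xb + t *\<^sub>R v) \<le> f xb + t\<^sup>2 / 2 * (- inner z v + e)"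
      using eventually_at_right_zero_ex by blast
    with e \<sigma> \<epsilon>(2) show ?thesis unfolding M_def by (intro second_order_estimate) auto
  qed
  then show ?thesis by (rule field_le_epsilon_mult)
qed

lemma nonneg_combination_in_normal_cone:
  assumes "S \<subseteq> active" "finite S" "\<forall>p\<in>S. 0 \<le> l p"
  shows "(\<Sum>p\<in>S. l p *\<^sub>R fst p) \<in> normal_cone \<Theta> (g xb)"
  unfolding normal_cone_def
proof clarify
  fix y assume "y \<in> \<Theta>"
  have "inner (\<Sum>p\<in>S. l p *\<^sub>R fst p) (y - g xb)
      = (\<Sum>p\<in>S. l p * (inner (fst p) y - inner (fst p) (g xb)))"
    by (simp add: inner_sum_left inner_diff_right right_diff_distrib sum_subtractf)
  also have "\<dots> = (\<Sum>p\<in>S. l p * (inner (fst p) y - snd p))"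
    using assms(1) by (intro sum.cong) (auto simp: active_def)
  also have "\<dots> \<le> 0"
  proof (rule sum_nonpos)
    fix p assume "p \<in> S"
    with assms \<open>y \<in> \<Theta>\<close> have "inner (fst p) y \<le> snd p" "0 \<le> l p"
      by (auto simp: Theta_eq active_def)
    then show "l p * (inner (fst p) y - snd p) \<le> 0" by (simp add: mult_nonneg_nonpos)
  qed
  finally show "inner (\<Sum>p\<in>S. l p *\<^sub>R fst p) (y - g xb) \<le> 0" .
qed

lemma inner_transpose_Jg: "inner d (transpose (Jg xb) *v a) = inner a (Jg xb *v d)"
  by (simp add: inner_commute[of d] dot_lmul_matrix)

lemma Jg_transpose_sum:
  "transpose (Jg xb) *v (\<Sum>p\<in>S. l p *\<^sub>R fst p) = (\<Sum>p\<in>S. l p *\<^sub>R (transpose (Jg xb) *v fst p))"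
  by (simp add: linear_sum[OF matrix_vector_mul_linear] matrix_vector_mult_scaleR del: transpose_matrix_vector)

lemma multiplier_exists: "\<exists>y \<in> normal_cone \<Theta> (g xb). Df xb + transpose (Jg xb) *v y = 0"
proof (rule farkas_inequality[OF finite_active,
      where z="- Df xb" and a="\<lambda>p. transpose (Jg xb) *v fst p" and b="\<lambda>_. 0" and \<gamma>=0])
  fix l assume l: "\<forall>p\<in>active. 0 \<le> l p" "- Df xb = (\<Sum>p\<in>active. l p *\<^sub>R (transpose (Jg xb) *v fst p))"
  then have "Df xb + transpose (Jg xb) *v (\<Sum>p\<in>active. l p *\<^sub>R fst p) = 0"
    unfolding Jg_transpose_sum by (simp flip: l(2) del: transpose_matrix_vector)
  with l(1) show ?thesis using nonneg_combination_in_normal_cone finite_active by blast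
next
  fix d s assume "inner d (- Df xb) < s * 0" "\<forall>p\<in>active. s * 0 \<le> inner d (transpose (Jg xb) *v fst p)"
  then have "inner (Df xb) d > 0" "\<forall>p\<in>active. inner (fst p) (Jg xb *v (- d)) \<le> 0"
    by (auto simp: inner_transpose_Jg inner_commute vec.neg simp del: transpose_matrix_vector)
  with first_order_necessary show ?thesis by fastforce
qed

lemma critical_direction_first_order:
  assumes v: "\<forall>p\<in>active. inner (fst p) (Jg xb *v v) \<le> 0" and Dv: "inner (Df xb) v = 0"
    and d: "\<forall>p\<in>active. inner (fst p) (Jg xb *v v) = 0 \<longrightarrow> inner (fst p) (Jg xb *v d) \<ge> 0"
  shows "inner (Df xb) d \<le> 0"
proof -
  have "\<forall>p\<in>active. eventually (\<lambda>s. inner (fst p) (Jg xb *v v + s *\<^sub>R (- (Jg xb *v d)) + s\<^sup>2 *\<^sub>R 0) \<le> 0)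
          (at_right 0)"
  proof
    fix p assume "p \<in> active"
    with v d show "eventually (\<lambda>s. inner (fst p) (Jg xb *v v + s *\<^sub>R (- (Jg xb *v d)) + s\<^sup>2 *\<^sub>R 0) \<le> 0)
        (at_right 0)"
      by (intro halfspace_contains_curve_eventually) auto
  qed
  from eventually_ball_finite[OF finite_active this] eventually_at_right_less[of "0::real"]
  have "eventually (\<lambda>s. 0 < s \<and> (\<forall>p\<in>active. inner (fst p) (Jg xb *v (v - s *\<^sub>R d)) \<le> 0)) (at_right 0)"
    by eventually_elim (simp add: vec.diff matrix_vector_mult_scaleR)
  then obtain s where "0 < s" "\<forall>p\<in>active. inner (fst p) (Jg xb *v (v - s *\<^sub>R d)) \<le> 0"
    using eventually_at_right_zero_ex by blast
  with first_order_necessary have "0 \<le> - s * inner (Df xb) d"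
    by (fastforce simp: Dv inner_diff_right)
  with \<open>0 < s\<close> show ?thesis by (simp add: mult_le_0_iff)
qed

lemma second_order_dual_infeasible:
  assumes v: "\<forall>p\<in>active. inner (fst p) (Jg xb *v v) \<le> 0" and Dv: "inner (Df xb) v = 0"
    and zv: "(z, v) \<in> regular_normal_cone {(x, Df x) | x. True} (xb, Df xb)"
    and \<sigma>: "\<sigma> \<ge> 0"
    and growth: "\<exists>\<epsilon>>0. \<forall>x. g x \<in> \<Theta> \<and> dist x xb < \<epsilon> \<longrightarrow> f x \<ge> f xb + \<sigma> / 2 * (norm (x - xb))\<^sup>2"
    and "0 \<le> s"
    and d: "\<forall>p\<in>active. inner (fst p) (Jg xb *v v) = 0 \<longrightarrow>
              s * inner (fst p) (hess_g v) \<le> inner (fst p) (Jg xb *v d)"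
  shows "s * (\<sigma> * (norm v)\<^sup>2 + inner z v) \<le> - inner (Df xb) d"
proof (cases "s = 0")
  case True
  with d have "inner (Df xb) d \<le> 0" by (intro critical_direction_first_order[OF v Dv]) auto
  with True show ?thesis by simp
next
  case False
  \<comment> \<open>then \<open>u = -d/s\<close> is an admissible second-order direction\<close>
  define u where "u = (- 1 / s) *\<^sub>R d"
  have "\<forall>p\<in>active. inner (fst p) (Jg xb *v v) = 0 \<longrightarrow> inner (fst p) (Jg xb *v u + hess_g v) \<le> 0"
  proof (intro ballI impI)
    fix p assume "p \<in> active" "inner (fst p) (Jg xb *v v) = 0"
    with d have "s * inner (fst p) (hess_g v) \<le> inner (fst p) (Jg xb *v d)" by blast
    moreover have "inner (fst p) (Jg xb *v u + hess_g v)
        = (s * inner (fst p) (hess_g v) - inner (fst p) (Jg xb *v d)) / s"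
      using False
      by (simp add: u_def vec.neg matrix_vector_mult_scaleR inner_add_right inner_diff_right field_simps)
    ultimately show "inner (fst p) (Jg xb *v u + hess_g v) \<le> 0"
      using \<open>0 \<le> s\<close> by (simp add: divide_nonpos_nonneg)
  qed
  from second_order_core[OF v this Dv zv \<sigma> growth]
  have "\<sigma> * (norm v)\<^sup>2 + inner z v \<le> - inner (Df xb) d / s" by (simp add: u_def)
  with \<open>0 \<le> s\<close> False show ?thesis by (simp add: field_simps)
qed

lemma second_order_multiplier_bound:
  assumes y: "y \<in> normal_cone \<Theta> (g xb)" "Df xb + transpose (Jg xb) *v y = 0"
    and unique: "\<forall>y'. y' \<in> normal_cone \<Theta> (g xb) \<and> Df xb + transpose (Jg xb) *v y' = 0 \<longrightarrow> y' = y"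
    and v: "v \<in> critical_cone {x. g x \<in> \<Theta>} xb (- Df xb)"
    and zv: "(z, v) \<in> regular_normal_cone {(x, Df x) | x. True} (xb, Df xb)"
    and \<sigma>: "\<sigma> \<ge> 0"
    and growth: "\<exists>\<epsilon>>0. \<forall>x. g x \<in> \<Theta> \<and> dist x xb < \<epsilon> \<longrightarrow> f x \<ge> f xb + \<sigma> / 2 * (norm (x - xb))\<^sup>2"
  shows "\<sigma> * (norm v)\<^sup>2 \<le> - inner z v + inner y (hess_g v)"
proof -
  have v_lin: "\<forall>p\<in>active. inner (fst p) (Jg xb *v v) \<le> 0" and Dv: "inner (Df xb) v = 0"
    using v tangent_cone_linearized by (auto simp: critical_cone_def)
  define I where "I = {p\<in>active. inner (fst p) (Jg xb *v v) = 0}"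
  have "finite I" using finite_active by (simp add: I_def)
  show ?thesis
  proof (rule farkas_inequality[OF \<open>finite I\<close>, where z="- Df xb" and \<gamma>="\<sigma> * (norm v)\<^sup>2 + inner z v"
        and a="\<lambda>p. transpose (Jg xb) *v fst p" and b="\<lambda>p. inner (fst p) (hess_g v)"])
    fix l assume l: "\<forall>p\<in>I. 0 \<le> l p" "- Df xb = (\<Sum>p\<in>I. l p *\<^sub>R (transpose (Jg xb) *v fst p))"
      "\<sigma> * (norm v)\<^sup>2 + inner z v \<le> (\<Sum>p\<in>I. l p * inner (fst p) (hess_g v))"
    define y' where "y' = (\<Sum>p\<in>I. l p *\<^sub>R fst p)"
    have "y' \<in> normal_cone \<Theta> (g xb)"
      unfolding y'_def using \<open>finite I\<close> l(1) by (intro nonneg_combination_in_normal_cone) (auto simp: I_def)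
    moreover have "Df xb + transpose (Jg xb) *v y' = 0"
      unfolding y'_def Jg_transpose_sum by (simp flip: l(2) del: transpose_matrix_vector)
    ultimately have "y' = y" using unique by blast
    moreover have "inner y' (hess_g v) = (\<Sum>p\<in>I. l p * inner (fst p) (hess_g v))"
      by (simp add: y'_def inner_sum_left)
    ultimately show ?thesis using l(3) by simp
  next
    fix d s assume ds: "0 \<le> s" "inner d (- Df xb) < s * (\<sigma> * (norm v)\<^sup>2 + inner z v)"
      "\<forall>p\<in>I. s * inner (fst p) (hess_g v) \<le> inner d (transpose (Jg xb) *v fst p)"
    then have "\<forall>p\<in>active. inner (fst p) (Jg xb *v v) = 0 \<longrightarrow>
        s * inner (fst p) (hess_g v) \<le> inner (fst p) (Jg xb *v d)"
      by (auto simp: I_def inner_transpose_Jg simp del: transpose_matrix_vector)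
    from second_order_dual_infeasible[OF v_lin Dv zv \<sigma> growth ds(1) this] ds(2) show ?thesis
      by (simp add: inner_commute)
  qed
qed

lemma second_order_condition:
  assumes y: "y \<in> normal_cone \<Theta> (g xb)" "Df xb + transpose (Jg xb) *v y = 0"
    and unique: "\<forall>y'. y' \<in> normal_cone \<Theta> (g xb) \<and> Df xb + transpose (Jg xb) *v y' = 0 \<longrightarrow> y' = y"
    and \<sigma>: "\<sigma> \<ge> 0"
    and growth: "\<exists>\<epsilon>>0. \<forall>x. g x \<in> \<Theta> \<and> dist x xb < \<epsilon> \<longrightarrow> f x \<ge> f xb + \<sigma> / 2 * (norm (x - xb))\<^sup>2"
  shows "\<forall>w \<in> uminus ` critical_cone {x. g x \<in> \<Theta>} xb (- Df xb).
           \<forall>z \<in> regular_second_subdiff Df xb w.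
             inner z w + inner w ((\<Sum>i\<in>UNIV. y $ i *\<^sub>R Hg i xb) *v w) \<ge> \<sigma> * (norm w)\<^sup>2"
proof (intro ballI)
  fix w z assume w: "w \<in> uminus ` critical_cone {x. g x \<in> \<Theta>} xb (- Df xb)"
    and z: "z \<in> regular_second_subdiff Df xb w"
  then obtain v where v: "v \<in> critical_cone {x. g x \<in> \<Theta>} xb (- Df xb)" "w = - v" by blast
  with z have "(z, v) \<in> regular_normal_cone {(x, Df x) | x. True} (xb, Df xb)"
    by (simp add: regular_second_subdiff_def)
  from second_order_multiplier_bound[OF y unique v(1) this \<sigma> growth]
  show "inner z w + inner w ((\<Sum>i\<in>UNIV. y $ i *\<^sub>R Hg i xb) *v w) \<ge> \<sigma> * (norm w)\<^sup>2"
    using v(2) by (simp add: inner_hess_g vec.neg)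
qed

lemma optimality_conditions:
  shows "(\<exists>yb \<in> normal_cone \<Theta> (g xb). Df xb + transpose (Jg xb) *v yb = 0)
     \<and> (\<forall>yb. yb \<in> normal_cone \<Theta> (g xb) \<and> Df xb + transpose (Jg xb) *v yb = 0 \<and>
            (\<forall>y. y \<in> normal_cone \<Theta> (g xb) \<and> Df xb + transpose (Jg xb) *v y = 0 \<longrightarrow> y = yb) \<longrightarrow>
          (\<forall>w \<in> uminus ` critical_cone {x. g x \<in> \<Theta>} xb (- Df xb).
             \<forall>z \<in> regular_second_subdiff Df xb w.
               inner z w + inner w ((\<Sum>i\<in>UNIV. yb $ i *\<^sub>R Hg i xb) *v w) \<ge> 0)
        \<and> (\<forall>\<sigma>>0. (\<exists>\<epsilon>>0. \<forall>x. g x \<in> \<Theta> \<and> dist x xb < \<epsilon> \<longrightarrow>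
                        f x \<ge> f xb + \<sigma> / 2 * (norm (x - xb))\<^sup>2) \<longrightarrow>
             (\<forall>w \<in> uminus ` critical_cone {x. g x \<in> \<Theta>} xb (- Df xb).
                \<forall>z \<in> regular_second_subdiff Df xb w.
                  inner z w + inner w ((\<Sum>i\<in>UNIV. yb $ i *\<^sub>R Hg i xb) *v w) \<ge> \<sigma> * (norm w)\<^sup>2)))"
proof (intro conjI allI impI)
  fix y assume "y \<in> normal_cone \<Theta> (g xb) \<and> Df xb + transpose (Jg xb) *v y = 0 \<and>
    (\<forall>y'. y' \<in> normal_cone \<Theta> (g xb) \<and> Df xb + transpose (Jg xb) *v y' = 0 \<longrightarrow> y' = y)"
  then have y: "y \<in> normal_cone \<Theta> (g xb)" "Df xb + transpose (Jg xb) *v y = 0"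
    "\<forall>y'. y' \<in> normal_cone \<Theta> (g xb) \<and> Df xb + transpose (Jg xb) *v y' = 0 \<longrightarrow> y' = y"
    by blast+
  show "\<forall>w \<in> uminus ` critical_cone {x. g x \<in> \<Theta>} xb (- Df xb). \<forall>z \<in> regular_second_subdiff Df xb w.
      inner z w + inner w ((\<Sum>i\<in>UNIV. y $ i *\<^sub>R Hg i xb) *v w) \<ge> 0"
    using second_order_condition[OF y, where \<sigma>=0] local_min by simp
  fix \<sigma> :: real assume "\<sigma> > 0" and "\<exists>\<epsilon>>0. \<forall>x. g x \<in> \<Theta> \<and> dist x xb < \<epsilon> \<longrightarrow>
      f x \<ge> f xb + \<sigma> / 2 * (norm (x - xb))\<^sup>2"
  then show "\<forall>w \<in> uminus ` critical_cone {x. g x \<in> \<Theta>} xb (- Df xb). \<forall>z \<in> regular_second_subdiff Df xb w.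
      inner z w + inner w ((\<Sum>i\<in>UNIV. y $ i *\<^sub>R Hg i xb) *v w) \<ge> \<sigma> * (norm w)\<^sup>2"
    by (intro second_order_condition[OF y]) auto
qed (rule multiplier_exists)

end
theorem theorem7p3:
  fixes f :: "real^'n \<Rightarrow> real" and Df :: "real^'n \<Rightarrow> real^'n"
    and g :: "real^'n \<Rightarrow> real^'m" and Jg :: "real^'n \<Rightarrow> real^'n^'m"
    and Hg :: "'m \<Rightarrow> real^'n \<Rightarrow> real^'n^'n"
    and \<Theta> :: "(real^'m) set" and xb :: "real^'n"
  assumes poly: "polyhedron \<Theta>" and nonempty: "\<Theta> \<noteq> {}"
    and feas: "g xb \<in> \<Theta>"
    and locmin: "\<exists>\<epsilon>>0. \<forall>x. g x \<in> \<Theta> \<and> dist x xb < \<epsilon> \<longrightarrow> f xb \<le> f x"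
    and f_C11: "\<exists>\<delta>>0. \<exists>L. (\<forall>x\<in>ball xb \<delta>. (f has_derivative (\<lambda>h. inner (Df x) h)) (at x))
                   \<and> (\<forall>x\<in>ball xb \<delta>. \<forall>y\<in>ball xb \<delta>. norm (Df x - Df y) \<le> L * dist x y)"
    and g_C2: "\<exists>\<delta>>0. \<forall>x\<in>ball xb \<delta>. (g has_derivative (\<lambda>h. Jg x *v h)) (at x)
                   \<and> (\<forall>i. ((\<lambda>u. Jg u $ i) has_derivative (\<lambda>h. Hg i x *v h)) (at x))
                   \<and> (\<forall>i. continuous_on (ball xb \<delta>) (Hg i))"
    and MSCQ: "\<exists>U \<kappa>. open U \<and> xb \<in> U \<and> \<kappa> > 0 \<and>
                   (\<forall>x\<in>U. infdist x {x. g x \<in> \<Theta>} \<le> \<kappa> * infdist (g x) \<Theta>)"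
  shows "(\<exists>yb \<in> normal_cone \<Theta> (g xb). Df xb + transpose (Jg xb) *v yb = 0)
     \<and> (\<forall>yb. yb \<in> normal_cone \<Theta> (g xb) \<and> Df xb + transpose (Jg xb) *v yb = 0 \<and>
            (\<forall>y. y \<in> normal_cone \<Theta> (g xb) \<and> Df xb + transpose (Jg xb) *v y = 0 \<longrightarrow> y = yb) \<longrightarrow>
          (\<forall>w \<in> uminus ` critical_cone {x. g x \<in> \<Theta>} xb (- Df xb).
             \<forall>z \<in> regular_second_subdiff Df xb w.
               inner z w + inner w ((\<Sum>i\<in>UNIV. yb $ i *\<^sub>R Hg i xb) *v w) \<ge> 0)
        \<and> (\<forall>\<sigma>>0. (\<exists>\<epsilon>>0. \<forall>x. g x \<in> \<Theta> \<and> dist x xb < \<epsilon> \<longrightarrow>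
                        f x \<ge> f xb + \<sigma> / 2 * (norm (x - xb))\<^sup>2) \<longrightarrow>
             (\<forall>w \<in> uminus ` critical_cone {x. g x \<in> \<Theta>} xb (- Df xb).
                \<forall>z \<in> regular_second_subdiff Df xb w.
                  inner z w + inner w ((\<Sum>i\<in>UNIV. yb $ i *\<^sub>R Hg i xb) *v w) \<ge> \<sigma> * (norm w)\<^sup>2)))"
proof -
  obtain P where "finite P" "\<Theta> = {y. \<forall>p\<in>P. inner (fst p) y \<le> snd p}"
    using polyhedron_finite_inequalities[OF poly] by blast
  moreover obtain \<delta>f L where "\<delta>f > 0"
    "\<forall>x\<in>ball xb \<delta>f. (f has_derivative (\<lambda>h. inner (Df x) h)) (at x)"
    "\<forall>x\<in>ball xb \<delta>f. \<forall>y\<in>ball xb \<delta>f. norm (Df x - Df y) \<le> L * dist x y"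
    using f_C11 by blast
  moreover obtain \<delta>g where "\<delta>g > 0" "\<forall>x\<in>ball xb \<delta>g. (g has_derivative (\<lambda>h. Jg x *v h)) (at x)"
    "\<forall>i. ((\<lambda>u. Jg u $ i) has_derivative (\<lambda>h. Hg i xb *v h)) (at xb)"
    using g_C2 by (metis centre_in_ball)
  moreover obtain U \<kappa> where "open U" "xb \<in> U" "\<kappa> > 0"
    "\<forall>x\<in>U. infdist x {x. g x \<in> \<Theta>} \<le> \<kappa> * infdist (g x) \<Theta>"
    using MSCQ by blast
  ultimately interpret polyhedral_minimizer f Df g Jg Hg \<Theta> xb P \<delta>f L \<delta>g U \<kappa>
    using feas locmin by unfold_locales auto
  show ?thesis by (rule optimality_conditions)
qed

end
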